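(* Let $C$ be a Plotkin-optimal projective linear code over $\mathbb{Z}_4$ of type $4^{k_1}2^{k_2}$ with exactly two nonzero Lee weights, and let $\Phi(C)\subseteq\mathbb{F}_2^{2n}$ be its Gray image. Then there is an integer $t$ with $1\le t\le k_1$ such that $\Phi(C)$ is a binary code of length $2^{2k_1+k_2}-2^{2k_1+k_2-t}$ with $2^{2k_1+k_2}$ codewords, whose nonzero Hamming weights are exactly $w_1=2^{2k_1+k_2-1}-2^{2k_1+k_2-t-1}$ and $w_2=2^{2k_1+k_2-1}$, occurring $2^{2k_1+k_2}-2^t$ and $2^t-1$ times respectively. In particular, these are the parameters and weight distribution of a binary two-weight linear code of type SU1 in the sense of Calderbank and Kantor, i.e. with $q=2$, dimension $l=2k_1+k_2$, length $\frac{q^l-q^m}{q-1}$, weights $q^{l-1}-q^{m-1}$ and $q^{l-1}$ with frequencies $q^l-q^{l-m}$ and $q^{l-m}-1$, where $m=2k_1+k_2-t$.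
   Context: A linear code of length $n$ over $\mathbb{Z}_4$ is a $\mathbb{Z}_4$-submodule of $\mathbb{Z}_4^n$, of type $4^{k_1}2^{k_2}$ if isomorphic to $\mathbb{Z}_4^{k_1}\times\mathbb{Z}_2^{k_2}$. Lee weight: $w_L(0)=0,w_L(1)=1,w_L(2)=2,w_L(3)=1$, additive on vectors; $d_L(C)$ is the minimum nonzero Lee weight. $C$ is Plotkin-optimal if $d_L(C)=\lfloor\frac{|C|}{|C|-1}n\rfloor$; $C$ is projective if $d_L(C^\perp)\ge3$ where the dual is with respect to $\sum x_iy_i\in\mathbb{Z}_4$. The Gray map $\phi:\mathbb{Z}_4\to\mathbb{F}_2^2$ is $\phi(0)=(0,0),\phi(1)=(0,1),\phi(2)=(1,1),\phi(3)=(1,0)$, and $\Phi:\mathbb{Z}_4^n\to\mathbb{F}_2^{2n}$ applies $\phi$ coordinatewise; it maps Lee weight to Hamming weight. *)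

theory Defs
  imports Complex_Main "HOL-Library.Numeral_Type"
begin


definition vadd :: "'a::plus list \<Rightarrow> 'a list \<Rightarrow> 'a list" where
  "vadd x y = map2 (+) x y"

definition smul :: "'a::times \<Rightarrow> 'a list \<Rightarrow> 'a list" where
  "smul a x = map ((*) a) x"

definition z4_linear_code :: "nat \<Rightarrow> 4 list set \<Rightarrow> bool" where
  "z4_linear_code n C \<longleftrightarrow> C \<subseteq> {x. length x = n} \<and> replicate n 0 \<in> C \<and>
     (\<forall>x\<in>C. \<forall>y\<in>C. vadd x y \<in> C) \<and> (\<forall>a. \<forall>x\<in>C. smul a x \<in> C)"

text \<open>C is of type 4^k1 2^k2: C is isomorphic (as a Z4-module, equivalently as an
  abelian group) to Z4^k1 x Z2^k2.\<close>
definition z4_code_type :: "4 list set \<Rightarrow> nat \<Rightarrow> nat \<Rightarrow> bool" where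
  "z4_code_type C k1 k2 \<longleftrightarrow>
     (\<exists>f :: 4 list \<Rightarrow> 4 list \<times> 2 list.
        bij_betw f C {(a, b). length a = k1 \<and> length b = k2} \<and>
        (\<forall>x\<in>C. \<forall>y\<in>C. f (vadd x y) = (vadd (fst (f x)) (fst (f y)), vadd (snd (f x)) (snd (f y)))))"

definition lee :: "4 \<Rightarrow> nat" where
  "lee a = (if a = 0 then 0 else if a = 2 then 2 else 1)"

definition lee_wt :: "4 list \<Rightarrow> nat" where
  "lee_wt x = sum_list (map lee x)"

definition lee_dist :: "4 list set \<Rightarrow> nat" where
  "lee_dist C = Min {lee_wt x | x. x \<in> C \<and> x \<noteq> replicate (length x) 0}"

definition plotkin_optimal :: "nat \<Rightarrow> 4 list set \<Rightarrow> bool" where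
  "plotkin_optimal n C \<longleftrightarrow>
     int (lee_dist C) = \<lfloor>real (card C) / (real (card C) - 1) * real n\<rfloor>"

definition z4_dual :: "nat \<Rightarrow> 4 list set \<Rightarrow> 4 list set" where
  "z4_dual n C = {y. length y = n \<and> (\<forall>x\<in>C. sum_list (map2 (*) x y) = 0)}"

text \<open>Projective: d_L(C^perp) \<ge> 3, i.e. every nonzero dual codeword has Lee weight \<ge> 3
  (vacuous if the dual is zero).\<close>
definition projective :: "nat \<Rightarrow> 4 list set \<Rightarrow> bool" where
  "projective n C \<longleftrightarrow> (\<forall>y\<in>z4_dual n C. y \<noteq> replicate n 0 \<longrightarrow> lee_wt y \<ge> 3)"

definition lee_weights :: "4 list set \<Rightarrow> nat set" where
  "lee_weights C = {lee_wt x | x. x \<in> C \<and> x \<noteq> replicate (length x) 0}"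

definition gray :: "4 \<Rightarrow> 2 list" where
  "gray a = (if a = 0 then [0, 0] else if a = 1 then [0, 1] else if a = 2 then [1, 1] else [1, 0])"

definition Gray :: "4 list \<Rightarrow> 2 list" where
  "Gray x = concat (map gray x)"

definition ham_wt :: "2 list \<Rightarrow> nat" where
  "ham_wt y = length (filter (\<lambda>c. c \<noteq> 0) y)"

end

theory Submission
  imports Defs "HOL-Computational_Algebra.Primes"
begin

(* Put g(c) = re_chi_sum c = \<Sum>_i Re(i^(c_i)) = n - w_L(c). Orthogonality of the characters of C,
   together with projectivity (C^perp has no nonzero word of Lee weight at most 2), yields the
   moment identities
     \<Sum>_c g(c) = 0,   2 \<Sum>_c g(c)^2 = n |C|,   \<Sum>_c g(c) Re(i^(\<phi>(c))) = 0
   for every homomorphism \<phi> : C \<rightarrow> 2Z_4.  The second one gives |C| \<ge> 2n, so Plotkin-optimality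
   forces the minimum Lee weight to be n.  If the other weight is w and B (heavy) is the set of
   words of weight w, the first two identities become (w - n)|B| = n and 2w = |C| = 2^(2k1+k2);
   hence (|B| + 1)(w - n) = w is a power of 2 and |B| + 1 = 2^t.  The third identity makes every
   homomorphism C \<rightarrow> 2Z_4 vanish on B \<union> {0}, which therefore lies in 2C \<cong> Z_2^k1, so t \<le> k1.
   Finally the Gray map is an injection turning Lee weights into Hamming weights. *)

section \<open>Arithmetic in Z_4\<close>

lemma Z4_cases: "(x::4) = 0 \<or> x = 1 \<or> x = 2 \<or> x = 3"
proof (cases x)
  case (of_int z)
  then have "z = 0 \<or> z = 1 \<or> z = 2 \<or> z = 3" by simp arith
  then show ?thesis using of_int by auto
qed

lemma Z2_cases: "(x::2) = 0 \<or> x = 1"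
proof (cases x)
  case (of_int z)
  then have "z = 0 \<or> z = 1" by simp arith
  then show ?thesis using of_int by auto
qed

definition chi :: "4 \<Rightarrow> complex" where
  "chi a = (if a = 0 then 1 else if a = 1 then \<i> else if a = 2 then -1 else -\<i>)"

definition re_chi :: "4 \<Rightarrow> int" where
  "re_chi a = (if a = 0 then 1 else if a = 2 then -1 else 0)"

lemma chi_add: "chi (a + b) = chi a * chi b"
  using Z4_cases[of a] Z4_cases[of b] by (auto simp: chi_def)

lemma chi_eq_1_iff: "chi a = 1 \<longleftrightarrow> a = 0"
  using Z4_cases[of a] by (auto simp: chi_def complex_eq_iff)

lemma Re_chi: "Re (chi a) = of_int (re_chi a)"
  using Z4_cases[of a] by (auto simp: chi_def re_chi_def)

lemma re_chi_0 [simp]: "re_chi 0 = 1"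
  by (simp add: re_chi_def)

lemma re_chi_le_1: "re_chi a \<le> 1"
  by (simp add: re_chi_def)

lemma re_chi_eq_1_iff: "re_chi a = 1 \<longleftrightarrow> a = 0"
  by (simp add: re_chi_def)

lemma re_chi_mult: "2 * re_chi a * re_chi b = re_chi (a + b) + re_chi (a - b)"
  using Z4_cases[of a] Z4_cases[of b] by (auto simp: re_chi_def)

lemma lee_eq_1_minus_re_chi: "int (lee a) = 1 - re_chi a"
  using Z4_cases[of a] by (auto simp: lee_def re_chi_def)

lemma lee_0: "lee 0 = 0"
  by (simp add: lee_def)

lemma lee_add_le: "lee (a + b) \<le> lee a + lee b"
  using Z4_cases[of a] Z4_cases[of b] by (auto simp: lee_def)

lemma lee_wt_conv_sum: "lee_wt x = (\<Sum>k<length x. lee (x ! k))"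
  by (simp add: lee_wt_def sum_list_sum_nth atLeast0LessThan)

lemma lee_wt_replicate_0 [simp]: "lee_wt (replicate m 0) = 0"
  by (simp add: lee_wt_def lee_def)

definition re_chi_sum :: "4 list \<Rightarrow> int" where
  "re_chi_sum x = (\<Sum>k<length x. re_chi (x ! k))"

lemma re_chi_sum_eq: "re_chi_sum x = int (length x) - int (lee_wt x)"
  by (simp add: re_chi_sum_def lee_wt_conv_sum of_nat_sum lee_eq_1_minus_re_chi sum_subtractf)

lemma add_order2_nonzero:
  fixes x y :: "'a::ab_group_add"
  assumes "x + x \<noteq> 0" and "y + y = 0"
  shows "x + y \<noteq> 0" and "x - y \<noteq> 0"
proof -
  have "x + y = (x - y) + (y + y)"
    by (simp add: algebra_simps)
  then have diff: "x - y = x + y"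
    using assms(2) by simp
  have "x + x = (x + y) + (x - y)"
    by (simp add: algebra_simps)
  then have "x + x = (x + y) + (x + y)"
    by (simp only: diff)
  then show "x + y \<noteq> 0"
    using assms(1) by (metis add_0)
  then show "x - y \<noteq> 0"
    using diff by metis
qed

section \<open>Homomorphisms on a code and character sums\<close>

lemma nth_vadd [simp]: "i < length x \<Longrightarrow> i < length y \<Longrightarrow> vadd x y ! i = x ! i + y ! i"
  by (simp add: vadd_def)

definition additive_on :: "'a::plus list set \<Rightarrow> ('a list \<Rightarrow> 'b::plus) \<Rightarrow> bool" where
  "additive_on C h \<longleftrightarrow> (\<forall>x\<in>C. \<forall>y\<in>C. h (vadd x y) = h x + h y)"

lemma additive_on_add:
  fixes f g :: "'a::plus list \<Rightarrow> 'b::ab_semigroup_add"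
  shows "additive_on C f \<Longrightarrow> additive_on C g \<Longrightarrow> additive_on C (\<lambda>x. f x + g x)"
  by (simp add: additive_on_def algebra_simps)

lemma additive_on_diff:
  fixes f g :: "'a::plus list \<Rightarrow> 'b::ab_group_add"
  shows "additive_on C f \<Longrightarrow> additive_on C g \<Longrightarrow> additive_on C (\<lambda>x. f x - g x)"
  by (simp add: additive_on_def algebra_simps)

locale z4_code =
  fixes n :: nat and C :: "4 list set"
  assumes linear: "z4_linear_code n C"
begin

lemma length_code: "x \<in> C \<Longrightarrow> length x = n"
  using linear by (auto simp: z4_linear_code_def)

lemma zero_in_code: "replicate n 0 \<in> C"
  using linear by (simp add: z4_linear_code_def)

lemma vadd_in_code: "x \<in> C \<Longrightarrow> y \<in> C \<Longrightarrow> vadd x y \<in> C"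
  using linear by (simp add: z4_linear_code_def)

lemma code_finite: "finite C"
proof (rule finite_subset)
  show "C \<subseteq> {x. set x \<subseteq> UNIV \<and> length x = n}"
    using length_code by auto
qed (rule finite_lists_length_eq, simp)

lemma lee_weights_code: "lee_weights C = lee_wt ` (C - {replicate n 0})"
  by (auto simp: lee_weights_def length_code)

lemma additive_on_nth: "i < n \<Longrightarrow> additive_on C (\<lambda>x. x ! i)"
  by (simp add: additive_on_def length_code)

lemma additive_on_zero:
  fixes h :: "4 list \<Rightarrow> 'b::group_add"
  assumes "additive_on C h"
  shows "h (replicate n 0) = 0"
proof -
  have "h (vadd (replicate n 0) (replicate n 0)) = h (replicate n 0) + h (replicate n 0)"
    using assms zero_in_code unfolding additive_on_def by blast
  moreover have "vadd (replicate n 0) (replicate n (0::4)) = replicate n 0"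
    by (simp add: vadd_def)
  ultimately have "h (replicate n 0) + h (replicate n 0) = h (replicate n 0) + 0"
    by simp
  then show ?thesis by (rule add_left_imp_eq)
qed

lemma translation_bij: "c \<in> C \<Longrightarrow> bij_betw (\<lambda>x. vadd x c) C C"
proof -
  assume c: "c \<in> C"
  have "inj_on (\<lambda>x. vadd x c) C"
  proof (rule inj_onI)
    fix x y assume "x \<in> C" "y \<in> C" "vadd x c = vadd y c"
    then have "x ! i + c ! i = y ! i + c ! i" if "i < n" for i
      using that c by (metis length_code nth_vadd)
    then show "x = y"
      using \<open>x \<in> C\<close> \<open>y \<in> C\<close> by (intro nth_equalityI) (simp_all add: length_code)
  qed
  moreover have "(\<lambda>x. vadd x c) ` C \<subseteq> C"
    using c vadd_in_code by auto
  ultimately show ?thesis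
    by (simp add: bij_betw_def endo_inj_surj code_finite)
qed

text \<open>Translating the summation variable by c0 multiplies the character sum by chi (h c0) \<noteq> 1.\<close>

lemma sum_chi_additive:
  assumes h: "additive_on C h" and c0: "c0 \<in> C" "h c0 \<noteq> 0"
  shows "(\<Sum>c\<in>C. chi (h c)) = 0"
proof -
  have "(\<Sum>c\<in>C. chi (h c)) = (\<Sum>c\<in>C. chi (h (vadd c c0)))"
    by (rule sum.reindex_bij_betw[OF translation_bij[OF c0(1)], where g = "\<lambda>c. chi (h c)", symmetric])
  also have "\<dots> = (\<Sum>c\<in>C. chi (h c)) * chi (h c0)"
    using h c0 by (simp add: additive_on_def chi_add sum_distrib_right)
  finally have "(\<Sum>c\<in>C. chi (h c)) * (1 - chi (h c0)) = 0"
    by (simp add: algebra_simps)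
  then show ?thesis
    using c0(2) chi_eq_1_iff by auto
qed

lemma sum_re_chi_additive:
  assumes "additive_on C h" and "\<exists>c\<in>C. h c \<noteq> 0"
  shows "(\<Sum>c\<in>C. re_chi (h c)) = 0"
proof -
  obtain c0 where c0: "c0 \<in> C" "h c0 \<noteq> 0"
    using assms(2) by blast
  have "real_of_int (\<Sum>c\<in>C. re_chi (h c)) = Re (\<Sum>c\<in>C. chi (h c))"
    by (simp add: Re_chi)
  also have "\<dots> = Re 0"
    by (simp only: sum_chi_additive[OF assms(1) c0])
  also have "\<dots> = 0"
    by simp
  finally show ?thesis
    by (simp only: of_int_eq_0_iff)
qed

end

section \<open>Projective codes\<close>

definition pair_vec :: "nat \<Rightarrow> nat \<Rightarrow> nat \<Rightarrow> 4 \<Rightarrow> 4 \<Rightarrow> 4 list" where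
  "pair_vec n i j a b = map (\<lambda>k. (if k = i then a else 0) + (if k = j then b else 0)) [0..<n]"

lemma length_pair_vec [simp]: "length (pair_vec n i j a b) = n"
  by (simp add: pair_vec_def)

lemma inner_pair_vec:
  assumes "length x = n" "i < n" "j < n"
  shows "sum_list (map2 (*) x (pair_vec n i j a b)) = x ! i * a + x ! j * b"
proof -
  have "sum_list (map2 (*) x (pair_vec n i j a b)) =
      (\<Sum>k<n. (if k = i then x ! k * a else 0) + (if k = j then x ! k * b else 0))"
    using assms by (auto simp: pair_vec_def sum_list_sum_nth atLeast0LessThan distrib_left
        intro!: sum.cong)
  also have "\<dots> = x ! i * a + x ! j * b"
    using assms by (simp add: sum.distrib)
  finally show ?thesis .
qed

lemma lee_wt_pair_vec:
  assumes "i < n" "j < n"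
  shows "lee_wt (pair_vec n i j a b) \<le> lee a + lee b"
proof -
  have "lee_wt (pair_vec n i j a b) =
      (\<Sum>k<n. lee ((if k = i then a else 0) + (if k = j then b else 0)))"
    by (simp add: pair_vec_def lee_wt_conv_sum)
  also have "\<dots> \<le> (\<Sum>k<n. lee (if k = i then a else 0) + lee (if k = j then b else 0))"
    by (intro sum_mono lee_add_le)
  also have "\<dots> = (\<Sum>k<n. (if k = i then lee a else 0) + (if k = j then lee b else 0))"
    by (intro sum.cong) (simp_all add: lee_0)
  also have "\<dots> = lee a + lee b"
    using assms by (simp add: sum.distrib)
  finally show ?thesis .
qed

locale projective_z4_code = z4_code +
  assumes projective: "projective n C"
begin

lemma projective_pair:
  assumes "i < n" "j < n" and weight: "lee a + lee b \<le> 2"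
    and nonzero: "a + (if i = j then b else 0) \<noteq> 0"
  shows "\<exists>c\<in>C. c ! i * a + c ! j * b \<noteq> 0"
proof (rule ccontr)
  let ?y = "pair_vec n i j a b"
  assume "\<not> ?thesis"
  then have "?y \<in> z4_dual n C"
    using assms(1,2) by (simp add: z4_dual_def inner_pair_vec length_code)
  moreover have "?y \<noteq> replicate n 0"
  proof
    assume "?y = replicate n 0"
    then have "?y ! i = 0"
      using assms(1) by simp
    then show False
      using assms(1) nonzero by (simp add: pair_vec_def)
  qed
  ultimately have "lee_wt ?y \<ge> 3"
    using projective by (simp add: projective_def)
  then show False
    using lee_wt_pair_vec[OF assms(1,2), of a b] weight by simp
qed

lemma exists_sum_columns_nonzero: "i < n \<Longrightarrow> j < n \<Longrightarrow> \<exists>c\<in>C. c ! i + c ! j \<noteq> 0"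
  using projective_pair[of i j 1 1] by (simp add: lee_def)

lemma exists_diff_columns_nonzero:
  "i < n \<Longrightarrow> j < n \<Longrightarrow> i \<noteq> j \<Longrightarrow> \<exists>c\<in>C. c ! i - c ! j \<noteq> 0"
  using projective_pair[of i j 1 "-1"] by (simp add: lee_def)

lemma sum_re_chi_sum_twisted:
  assumes \<phi>: "additive_on C \<phi>" and order2: "\<forall>c\<in>C. \<phi> c + \<phi> c = 0"
  shows "(\<Sum>c\<in>C. re_chi_sum c * re_chi (\<phi> c)) = 0"
proof -
  have column: "(\<Sum>c\<in>C. re_chi (c ! i + \<phi> c) + re_chi (c ! i - \<phi> c)) = 0" if i: "i < n" for i
  proof -
    obtain c where c: "c \<in> C" "c ! i + c ! i \<noteq> 0"
      using exists_sum_columns_nonzero[OF i i] by blast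
    have "c ! i + \<phi> c \<noteq> 0" "c ! i - \<phi> c \<noteq> 0"
      using add_order2_nonzero[OF c(2), of "\<phi> c"] order2 c(1) by simp_all
    then have "(\<Sum>c\<in>C. re_chi (c ! i + \<phi> c)) = 0" "(\<Sum>c\<in>C. re_chi (c ! i - \<phi> c)) = 0"
      using sum_re_chi_additive[OF additive_on_add[OF additive_on_nth[OF i] \<phi>]]
        sum_re_chi_additive[OF additive_on_diff[OF additive_on_nth[OF i] \<phi>]] c(1) by blast+
    then show ?thesis
      by (simp add: sum.distrib)
  qed
  have "2 * (\<Sum>c\<in>C. re_chi_sum c * re_chi (\<phi> c)) =
      (\<Sum>c\<in>C. \<Sum>i<n. 2 * re_chi (c ! i) * re_chi (\<phi> c))"
    by (simp add: re_chi_sum_def length_code sum_distrib_left sum_distrib_right mult.assoc)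
  also have "\<dots> = (\<Sum>c\<in>C. \<Sum>i<n. re_chi (c ! i + \<phi> c) + re_chi (c ! i - \<phi> c))"
    by (simp only: re_chi_mult)
  also have "\<dots> = (\<Sum>i<n. \<Sum>c\<in>C. re_chi (c ! i + \<phi> c) + re_chi (c ! i - \<phi> c))"
    by (rule sum.swap)
  also have "\<dots> = 0"
    using column by simp
  finally show ?thesis by simp
qed

lemma sum_re_chi_sum: "(\<Sum>c\<in>C. re_chi_sum c) = 0"
  using sum_re_chi_sum_twisted[of "\<lambda>_. 0"] by (simp add: additive_on_def)

lemma sum_re_chi_sum_squared: "2 * (\<Sum>c\<in>C. (re_chi_sum c)\<^sup>2) = int n * int (card C)"
proof -
  have column_pair: "(\<Sum>c\<in>C. re_chi (c ! i + c ! j) + re_chi (c ! i - c ! j)) =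
      (if i = j then int (card C) else 0)" if ij: "i < n" "j < n" for i j
  proof -
    have "(\<Sum>c\<in>C. re_chi (c ! i + c ! j)) = 0"
      using sum_re_chi_additive[OF additive_on_add[OF additive_on_nth[OF ij(1)] additive_on_nth[OF ij(2)]]]
        exists_sum_columns_nonzero[OF ij] by simp
    moreover have "(\<Sum>c\<in>C. re_chi (c ! i - c ! j)) = (if i = j then int (card C) else 0)"
      using sum_re_chi_additive[OF additive_on_diff[OF additive_on_nth[OF ij(1)] additive_on_nth[OF ij(2)]]]
        exists_diff_columns_nonzero[OF ij] by (cases "i = j") simp_all
    ultimately show ?thesis
      by (simp add: sum.distrib)
  qed
  have square: "2 * (re_chi_sum c)\<^sup>2 = (\<Sum>i<n. \<Sum>j<n. 2 * re_chi (c ! i) * re_chi (c ! j))"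
    if "c \<in> C" for c
    using that unfolding re_chi_sum_def power2_eq_square sum_product
    by (simp add: length_code sum_distrib_left mult.assoc)
  have "2 * (\<Sum>c\<in>C. (re_chi_sum c)\<^sup>2) = (\<Sum>c\<in>C. \<Sum>i<n. \<Sum>j<n. 2 * re_chi (c ! i) * re_chi (c ! j))"
    by (simp add: sum_distrib_left square)
  also have "\<dots> = (\<Sum>c\<in>C. \<Sum>i<n. \<Sum>j<n. re_chi (c ! i + c ! j) + re_chi (c ! i - c ! j))"
    by (simp only: re_chi_mult)
  also have "\<dots> = (\<Sum>i<n. \<Sum>j<n. \<Sum>c\<in>C. re_chi (c ! i + c ! j) + re_chi (c ! i - c ! j))"
    by (simp only: sum.swap[of _ C])
  also have "\<dots> = (\<Sum>i<n. \<Sum>j<n. if i = j then int (card C) else 0)"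
    using column_pair by simp
  also have "\<dots> = int n * int (card C)"
    by simp
  finally show ?thesis .
qed

lemma card_ge_twice_length: "2 * n \<le> card C"
proof -
  have "(re_chi_sum (replicate n 0))\<^sup>2 \<le> (\<Sum>c\<in>C. (re_chi_sum c)\<^sup>2)"
    by (rule member_le_sum) (simp_all add: zero_in_code code_finite)
  then have "int n * (2 * int n) \<le> int n * int (card C)"
    using sum_re_chi_sum_squared by (simp add: re_chi_sum_eq power2_eq_square)
  then show ?thesis
    by (cases "n = 0") simp_all
qed

end

lemma floor_plotkin_ratio:
  fixes N n :: nat
  assumes "n + 1 < N"
  shows "\<lfloor>real N / (real N - 1) * real n\<rfloor> = int n"
proof -
  have pos: "real N - 1 > 0"
    using assms by linarith
  have "real n \<le> real N / (real N - 1) * real n"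
    using pos by (simp add: field_simps)
  moreover have "real N / (real N - 1) * real n < real n + 1"
    using pos assms by (simp add: field_simps)
  ultimately show ?thesis
    by (simp add: floor_eq_iff)
qed

lemma (in projective_z4_code) plotkin_two_weights:
  assumes plotkin: "plotkin_optimal n C" and two: "card (lee_weights C) = 2"
  obtains w where "lee_weights C = {n, w}" and "n < w"
proof -
  obtain a b where ab: "lee_weights C = {a, b}" "a < b"
    using two unfolding card_2_iff by (metis insert_commute linorder_neqE_nat)
  have "2 \<le> card (C - {replicate n 0})"
    using two card_image_le[of "C - {replicate n 0}" lee_wt] code_finite
    by (simp add: lee_weights_code)
  then have three: "3 \<le> card C"
    using zero_in_code code_finite by (simp add: card_Diff_singleton)
  have "n \<noteq> 0"
  proof
    assume "n = 0"
    then have "C - {replicate n 0} = {}"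
      using length_code by auto
    then show False
      using ab by (metis empty_not_insert image_empty lee_weights_code)
  qed
  then have "n + 1 < card C"
    using card_ge_twice_length three by linarith
  then have "lee_dist C = n"
    using plotkin floor_plotkin_ratio by (simp add: plotkin_optimal_def)
  moreover have "lee_dist C = a"
    using ab by (simp add: lee_dist_def flip: lee_weights_def)
  ultimately show ?thesis
    using that ab by blast
qed

section \<open>Codes of type 4^k1 2^k2\<close>

lemma card_of_type:
  assumes "z4_code_type C k1 k2"
  shows "card C = 2 ^ (2 * k1 + k2)"
proof -
  have "card {a :: 4 list. length a = k1} = 4 ^ k1"
    using card_lists_length_eq[of "UNIV :: 4 set" k1] by simp
  moreover have "card {b :: 2 list. length b = k2} = 2 ^ k2"
    using card_lists_length_eq[of "UNIV :: 2 set" k2] by simp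
  moreover have "{(a :: 4 list, b :: 2 list). length a = k1 \<and> length b = k2} =
      {a. length a = k1} \<times> {b. length b = k2}"
    by auto
  ultimately have "card {(a :: 4 list, b :: 2 list). length a = k1 \<and> length b = k2} = 4 ^ k1 * 2 ^ k2"
    by (simp add: card_cartesian_product)
  then show ?thesis
    using assms by (auto simp: z4_code_type_def bij_betw_same_card power_add power_mult)
qed

definition z2_embed :: "2 \<Rightarrow> 4" where
  "z2_embed e = (if e = 0 then 0 else 2)"

lemma z2_embed_add: "z2_embed (a + b) = z2_embed a + z2_embed b"
  using Z2_cases[of a] Z2_cases[of b] by (auto simp: z2_embed_def)

lemma z2_embed_add_self: "z2_embed a + z2_embed a = 0"
  using Z2_cases[of a] by (auto simp: z2_embed_def)

lemma z2_embed_eq_0_iff: "z2_embed a = 0 \<longleftrightarrow> a = 0"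
  by (simp add: z2_embed_def)

lemma double_add_self: "(2::4) * a + 2 * a = 0"
  using Z4_cases[of a] by auto

lemma double_eq_0_iff: "(2::4) * a = 0 \<longleftrightarrow> a = 0 \<or> a = 2"
  using Z4_cases[of a] by auto

lemma order2_kernel_image:
  fixes f :: "4 list \<Rightarrow> 4 list \<times> 2 list"
  assumes f_add: "\<forall>x\<in>C. \<forall>y\<in>C. f (vadd x y) = (vadd (fst (f x)) (fst (f y)), vadd (snd (f x)) (snd (f y)))"
    and len: "\<And>c. c \<in> C \<Longrightarrow> length (fst (f c)) = k1 \<and> length (snd (f c)) = k2"
    and d: "d \<in> C"
    and vanish: "\<And>\<phi>. additive_on C \<phi> \<Longrightarrow> \<forall>c\<in>C. \<phi> c + \<phi> c = 0 \<Longrightarrow> \<phi> d = (0::4)"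
  shows "set (fst (f d)) \<subseteq> {0, 2}" and "snd (f d) = replicate k2 0"
proof -
  have entry: "fst (f d) ! j = 0 \<or> fst (f d) ! j = 2" if j: "j < k1" for j
  proof -
    have "additive_on C (\<lambda>c. 2 * fst (f c) ! j)"
      using f_add len j by (simp add: additive_on_def distrib_left)
    then have "2 * fst (f d) ! j = 0"
      using vanish[of "\<lambda>c. 2 * fst (f c) ! j"] by (simp add: double_add_self)
    then show ?thesis
      by (simp add: double_eq_0_iff)
  qed
  show "set (fst (f d)) \<subseteq> {0, 2}"
  proof
    fix x assume "x \<in> set (fst (f d))"
    then obtain j where "j < k1" "x = fst (f d) ! j"
      using len[OF d] by (auto simp: in_set_conv_nth)
    then show "x \<in> {0, 2}"
      using entry by auto
  qed
  have "snd (f d) ! j = 0" if j: "j < k2" for j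
  proof -
    have "additive_on C (\<lambda>c. z2_embed (snd (f c) ! j))"
      using f_add len j by (simp add: additive_on_def z2_embed_add)
    then show ?thesis
      using vanish[of "\<lambda>c. z2_embed (snd (f c) ! j)"] by (simp add: z2_embed_add_self z2_embed_eq_0_iff)
  qed
  then show "snd (f d) = replicate k2 0"
    using len[OF d] by (simp add: list_eq_iff_nth_eq)
qed

text \<open>The common kernel of all homomorphisms C \<rightarrow> 2Z_4 is 2C, which has 2^k1 elements.\<close>

lemma card_le_if_order2_characters_vanish:
  assumes type: "z4_code_type C k1 k2" and "D \<subseteq> C"
    and vanish: "\<And>\<phi> d. additive_on C \<phi> \<Longrightarrow> \<forall>c\<in>C. \<phi> c + \<phi> c = 0 \<Longrightarrow> d \<in> D \<Longrightarrow> \<phi> d = (0::4)"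
  shows "card D \<le> 2 ^ k1"
proof -
  obtain f :: "4 list \<Rightarrow> 4 list \<times> 2 list" where
    bij: "bij_betw f C {(a, b). length a = k1 \<and> length b = k2}" and
    f_add: "\<forall>x\<in>C. \<forall>y\<in>C. f (vadd x y) = (vadd (fst (f x)) (fst (f y)), vadd (snd (f x)) (snd (f y)))"
    using type by (auto simp: z4_code_type_def)
  have len: "length (fst (f c)) = k1 \<and> length (snd (f c)) = k2" if "c \<in> C" for c
    using bij_betwE[OF bij] that by auto
  let ?S = "{a :: 4 list. set a \<subseteq> {0, 2} \<and> length a = k1} \<times> {replicate k2 (0::2)}"
  have "f d \<in> ?S" if d: "d \<in> D" for d
  proof -
    have "d \<in> C"
      using d \<open>D \<subseteq> C\<close> by auto
    moreover have "\<phi> d = 0"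
      if "additive_on C \<phi>" "\<forall>c\<in>C. \<phi> c + \<phi> c = 0" for \<phi> :: "4 list \<Rightarrow> 4"
      by (rule vanish[OF that d])
    ultimately show ?thesis
      using order2_kernel_image[where f = f and d = d, OF f_add len] len
      by (simp add: mem_Times_iff)
  qed
  then have image: "f ` D \<subseteq> ?S"
    by blast
  have "inj_on f D"
    using bij \<open>D \<subseteq> C\<close> by (meson bij_betw_def inj_on_subset)
  then have "card D = card (f ` D)"
    by (simp add: card_image)
  also have "\<dots> \<le> card ?S"
    by (rule card_mono[OF _ image]) (simp add: finite_lists_length_eq)
  also have "card ?S = 2 ^ k1"
    by (simp add: card_cartesian_product card_lists_length_eq numeral_2_eq_2)
  finally show ?thesis .
qed

section \<open>The weight distribution of a projective two-weight code\<close>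

lemma sum_point_minus_block:
  fixes G F :: "'a \<Rightarrow> 'b::comm_ring"
  assumes "finite C" "z \<in> C" "B \<subseteq> C" "z \<notin> B"
    and G: "\<And>c. c \<in> C \<Longrightarrow> G c = (if c = z then x else 0) - (if c \<in> B then m else 0)"
  shows "(\<Sum>c\<in>C. G c * F c) = x * F z - m * sum F B"
proof -
  have "(\<Sum>c\<in>C. G c * F c) =
      (\<Sum>c\<in>C. (if c = z then x * F c else 0) - (if c \<in> B then m * F c else 0))"
    using G by (intro sum.cong) (auto simp: left_diff_distrib)
  also have "\<dots> = x * F z - m * sum F B"
    using assms(1-3) by (simp add: sum_subtractf sum.inter_restrict[symmetric] Int_absorb1
        sum_distrib_left)
  finally show ?thesis .
qed

locale two_weight_z4_code = projective_z4_code +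
  fixes w :: nat
  assumes lee_weights_eq: "lee_weights C = {n, w}" and length_less: "n < w"
begin

definition heavy :: "4 list set" where
  "heavy = {c \<in> C. lee_wt c = w}"

lemma heavy_subset: "heavy \<subseteq> C"
  by (auto simp: heavy_def)

lemma zero_notin_heavy: "replicate n 0 \<notin> heavy"
  using length_less by (simp add: heavy_def)

lemma finite_heavy: "finite heavy"
  using code_finite heavy_subset by (rule finite_subset[rotated])

lemma heavy_nonempty: "heavy \<noteq> {}"
proof -
  have "w \<in> lee_wt ` (C - {replicate n 0})"
    using lee_weights_eq by (simp flip: lee_weights_code)
  then show ?thesis
    by (auto simp: heavy_def)
qed

lemma lee_wt_cases: "c \<in> C \<Longrightarrow> c \<noteq> replicate n 0 \<Longrightarrow> lee_wt c = n \<or> lee_wt c = w"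
  using lee_weights_eq by (auto simp: lee_weights_code)

lemma re_chi_sum_codeword:
  assumes "c \<in> C"
  shows "re_chi_sum c =
    (if c = replicate n 0 then int n else 0) - (if c \<in> heavy then int w - int n else 0)"
  using assms lee_wt_cases[OF assms] zero_notin_heavy
  by (auto simp: re_chi_sum_eq length_code heavy_def)

lemma sum_re_chi_sum_mult:
  "(\<Sum>c\<in>C. re_chi_sum c * F c) = int n * F (replicate n 0) - (int w - int n) * sum F heavy"
  by (rule sum_point_minus_block[OF code_finite zero_in_code heavy_subset zero_notin_heavy
        re_chi_sum_codeword])

lemma heavy_count_int: "(int w - int n) * int (card heavy) = int n"
proof -
  have "(\<Sum>c\<in>C. re_chi_sum c * 1) = int n - (int w - int n) * int (card heavy)"
    by (simp only: sum_re_chi_sum_mult) simp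
  then show ?thesis
    using sum_re_chi_sum by simp
qed

lemma heavy_count: "(w - n) * card heavy = n"
proof -
  have "int ((w - n) * card heavy) = int n"
    using heavy_count_int length_less by (simp add: of_nat_diff)
  then show ?thesis
    by (simp only: of_nat_eq_iff)
qed

lemma card_heavy_pos: "0 < card heavy"
  using finite_heavy heavy_nonempty by (simp add: card_gt_0_iff)

lemma length_pos: "0 < n"
  using heavy_count card_heavy_pos length_less by (metis nat_0_less_mult_iff zero_less_diff)

lemma card_code: "card C = 2 * w"
proof -
  have "(\<Sum>c\<in>heavy. re_chi_sum c) = (\<Sum>c\<in>heavy. - (int w - int n))"
    using re_chi_sum_codeword heavy_subset zero_notin_heavy by (intro sum.cong) auto
  also have "\<dots> = - ((int w - int n) * int (card heavy))"
    by (simp add: algebra_simps)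
  also have "\<dots> = - int n"
    by (simp only: heavy_count_int)
  finally have heavy_sum: "(\<Sum>c\<in>heavy. re_chi_sum c) = - int n" .
  have "(\<Sum>c\<in>C. (re_chi_sum c)\<^sup>2) =
      int n * re_chi_sum (replicate n 0) - (int w - int n) * (\<Sum>c\<in>heavy. re_chi_sum c)"
    using sum_re_chi_sum_mult[of re_chi_sum] by (simp add: power2_eq_square)
  also have "\<dots> = int n * int w"
    using heavy_sum by (simp add: re_chi_sum_eq algebra_simps)
  finally have "int n * (2 * int w) = int n * int (card C)"
    using sum_re_chi_sum_squared by simp
  then show ?thesis
    using length_pos by auto
qed

lemma order2_vanishes:
  fixes \<phi> :: "4 list \<Rightarrow> 4"
  assumes \<phi>: "additive_on C \<phi>" and order2: "\<forall>c\<in>C. \<phi> c + \<phi> c = 0"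
    and d: "d \<in> insert (replicate n 0) heavy"
  shows "\<phi> d = 0"
proof -
  have "int n = (int w - int n) * (\<Sum>c\<in>heavy. re_chi (\<phi> c))"
    using sum_re_chi_sum_twisted[OF \<phi> order2] additive_on_zero[OF \<phi>]
    by (simp add: sum_re_chi_sum_mult)
  moreover have "int n = (int w - int n) * (\<Sum>c\<in>heavy. 1)"
    using heavy_count_int by simp
  ultimately have "(int w - int n) * (\<Sum>c\<in>heavy. 1 - re_chi (\<phi> c)) = 0"
    by (simp add: sum_subtractf right_diff_distrib)
  then have "(\<Sum>c\<in>heavy. 1 - re_chi (\<phi> c)) = 0"
    using length_less by simp
  then have "\<forall>c\<in>heavy. 1 - re_chi (\<phi> c) = 0"
    using finite_heavy re_chi_le_1 by (simp add: sum_nonneg_eq_0_iff)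
  then show ?thesis
    using d additive_on_zero[OF \<phi>] by (auto simp: re_chi_eq_1_iff)
qed

lemma card_light: "card {c \<in> C. lee_wt c = n} = card C - card heavy - 1"
proof -
  have "C = {c \<in> C. lee_wt c = n} \<union> insert (replicate n 0) heavy"
    using lee_wt_cases zero_in_code heavy_subset by (auto simp: heavy_def)
  moreover have "{c \<in> C. lee_wt c = n} \<inter> insert (replicate n 0) heavy = {}"
    using length_pos length_less by (auto simp: heavy_def)
  ultimately have "card C = card {c \<in> C. lee_wt c = n} + card (insert (replicate n 0) heavy)"
    using code_finite by (metis card_Un_disjoint finite_Un)
  then show ?thesis
    using zero_notin_heavy finite_heavy by simp
qed

end

lemma mult_eq_two_power:
  fixes b m k :: nat
  assumes "b * m = 2 ^ k"
  obtains t where "t \<le> k" "b = 2 ^ t" "m = 2 ^ (k - t)"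
proof -
  obtain t where t: "t \<le> k" "b = 2 ^ t"
    using assms divides_primepow_nat[OF two_is_prime_nat] by (metis dvd_triv_left)
  then have "2 ^ t * m = 2 ^ t * 2 ^ (k - t)"
    using assms by (simp flip: power_add)
  then show ?thesis
    using that t by simp
qed

lemma (in two_weight_z4_code) weight_parameters:
  assumes "card C = 2 ^ l"
  obtains t where "1 \<le> t" "card heavy + 1 = 2 ^ t" "w = 2 ^ (l - 1)"
    "n = 2 ^ (l - 1) - 2 ^ (l - t - 1)" "2 * n = 2 ^ l - 2 ^ (l - t)"
    "card {c \<in> C. lee_wt c = n} = 2 ^ l - 2 ^ t"
proof -
  have "l \<noteq> 0"
  proof
    assume "l = 0"
    then show False
      using assms card_code length_less by simp
  qed
  then have "2 * w = 2 * 2 ^ (l - 1)"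
    using assms card_code by (simp flip: power_Suc)
  then have w: "w = 2 ^ (l - 1)"
    by simp
  have "(card heavy + 1) * (w - n) = 2 ^ (l - 1)"
    using heavy_count length_less w by (simp add: algebra_simps)
  then obtain t where t: "t \<le> l - 1" "card heavy + 1 = 2 ^ t" "w - n = 2 ^ (l - 1 - t)"
    by (rule mult_eq_two_power)
  have "t \<noteq> 0"
  proof
    assume "t = 0"
    then show False
      using t(2) card_heavy_pos by simp
  qed
  moreover have n: "n = 2 ^ (l - 1) - 2 ^ (l - t - 1)"
    using t(3) w length_less by (simp add: diff_commute)
  moreover have "2 * n = 2 ^ l - 2 ^ (l - t)"
  proof -
    have "2 * 2 ^ (l - 1) = (2::nat) ^ l" "2 * 2 ^ (l - t - 1) = (2::nat) ^ (l - t)"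
      using \<open>l \<noteq> 0\<close> t(1) by (simp_all flip: power_Suc)
    then show ?thesis
      using n by (simp add: right_diff_distrib')
  qed
  moreover have "card {c \<in> C. lee_wt c = n} = 2 ^ l - 2 ^ t"
    using card_light assms t(2) by simp
  ultimately show ?thesis
    using that t(2) w by simp
qed

lemma (in two_weight_z4_code) weight_distribution:
  assumes type: "z4_code_type C k1 k2"
  defines "l \<equiv> 2 * k1 + k2"
  obtains t where "1 \<le> t" "t \<le> k1" "card heavy = 2 ^ t - 1" "w = 2 ^ (l - 1)"
    "n = 2 ^ (l - 1) - 2 ^ (l - t - 1)" "2 * n = 2 ^ l - 2 ^ (l - t)"
    "card {c \<in> C. lee_wt c = n} = 2 ^ l - 2 ^ t"
proof -
  obtain t where t: "1 \<le> t" "card heavy + 1 = 2 ^ t" "w = 2 ^ (l - 1)"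
    "n = 2 ^ (l - 1) - 2 ^ (l - t - 1)" "2 * n = 2 ^ l - 2 ^ (l - t)"
    "card {c \<in> C. lee_wt c = n} = 2 ^ l - 2 ^ t"
    using card_of_type[OF type] unfolding l_def[symmetric] by (rule weight_parameters)
  have "card (insert (replicate n 0) heavy) \<le> 2 ^ k1"
    by (rule card_le_if_order2_characters_vanish[OF type])
      (use order2_vanishes zero_in_code heavy_subset in auto)
  moreover have "card (insert (replicate n 0) heavy) = 2 ^ t"
    using t(2) zero_notin_heavy finite_heavy by simp
  ultimately have "t \<le> k1"
    by simp
  moreover have "card heavy = 2 ^ t - 1"
    using t(2) by simp
  ultimately show ?thesis
    using that t(1,3-6) by blast
qed

section \<open>The Gray image\<close>

lemma Gray_Nil [simp]: "Gray [] = []"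
  by (simp add: Gray_def)

lemma Gray_Cons [simp]: "Gray (a # x) = gray a @ Gray x"
  by (simp add: Gray_def)

lemma length_gray [simp]: "length (gray a) = 2"
  by (simp add: gray_def)

lemma length_Gray [simp]: "length (Gray x) = 2 * length x"
  by (induct x) simp_all

lemma ham_wt_Gray: "ham_wt (Gray x) = lee_wt x"
proof -
  have "ham_wt (gray a) = lee a" for a
    using Z4_cases[of a] by (auto simp: gray_def ham_wt_def lee_def)
  then show ?thesis
    by (induct x) (simp_all add: ham_wt_def lee_wt_def)
qed

lemma Gray_replicate_0: "Gray (replicate m 0) = replicate (2 * m) 0"
  by (induct m) (simp_all add: gray_def)

lemma inj_Gray: "inj Gray"
proof (rule injI)
  have gray: "gray a = gray b \<Longrightarrow> a = b" for a b
    using Z4_cases[of a] Z4_cases[of b] by (auto simp: gray_def)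
  show "Gray x = Gray y \<Longrightarrow> x = y" for x y
  proof (induct x arbitrary: y)
    case Nil
    then have "length (Gray y) = 0"
      by simp
    then show ?case
      by simp
  next
    case (Cons a x)
    have "length y \<noteq> 0"
      using arg_cong[OF Cons.prems, of length] by auto
    then obtain b y' where y: "y = b # y'"
      by (cases y) auto
    have "gray a = gray b \<and> Gray x = Gray y'"
      using Cons.prems y by (simp add: append_eq_append_conv)
    then show ?case
      using Cons.hyps gray y by blast
  qed
qed

lemma card_Gray_image: "card (Gray ` A) = card A"
  using inj_Gray by (simp add: card_image inj_on_subset)

lemma card_Gray_weight: "card {y \<in> Gray ` A. ham_wt y = v} = card {c \<in> A. lee_wt c = v}"
proof -
  have "{y \<in> Gray ` A. ham_wt y = v} = Gray ` {c \<in> A. lee_wt c = v}"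
    by (auto simp: ham_wt_Gray)
  then show ?thesis
    by (simp add: card_Gray_image)
qed

lemma (in z4_code) Gray_weights:
  "{ham_wt y | y. y \<in> Gray ` C \<and> y \<noteq> replicate (2 * n) 0} = lee_weights C"
proof -
  have "Gray ` C - {replicate (2 * n) 0} = Gray ` (C - {replicate n 0})"
    using inj_Gray by (simp add: image_set_diff flip: Gray_replicate_0)
  then have "{ham_wt y | y. y \<in> Gray ` C \<and> y \<noteq> replicate (2 * n) 0} =
      ham_wt ` Gray ` (C - {replicate n 0})"
    by blast
  then show ?thesis
    by (simp add: image_image ham_wt_Gray lee_weights_code)
qed

theorem mainTheorem3:
  fixes n k1 k2 :: nat and C :: "4 list set"
  assumes "z4_linear_code n C"
    and "z4_code_type C k1 k2"
    and "plotkin_optimal n C"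
    and "projective n C"
    and "card (lee_weights C) = 2"
  shows "\<exists>t::nat. 1 \<le> t \<and> t \<le> k1 \<and>
     (\<forall>y\<in>Gray ` C. length y = 2 * n) \<and>
     2 * n = 2 ^ (2 * k1 + k2) - 2 ^ (2 * k1 + k2 - t) \<and>
     card (Gray ` C) = 2 ^ (2 * k1 + k2) \<and>
     {ham_wt y | y. y \<in> Gray ` C \<and> y \<noteq> replicate (2 * n) 0} =
       {2 ^ (2 * k1 + k2 - 1) - 2 ^ (2 * k1 + k2 - t - 1), 2 ^ (2 * k1 + k2 - 1)} \<and>
     card {y \<in> Gray ` C. ham_wt y = 2 ^ (2 * k1 + k2 - 1) - 2 ^ (2 * k1 + k2 - t - 1)}
       = 2 ^ (2 * k1 + k2) - 2 ^ t \<and>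
     card {y \<in> Gray ` C. ham_wt y = 2 ^ (2 * k1 + k2 - 1)} = 2 ^ t - 1"
proof -
  interpret projective_z4_code n C
    using assms(1,4) by unfold_locales
  obtain w where "lee_weights C = {n, w}" "n < w"
    using plotkin_two_weights assms(3,5) by blast
  then interpret two_weight_z4_code n C w
    by unfold_locales
  define l where "l = 2 * k1 + k2"
  obtain t where t: "1 \<le> t" "t \<le> k1" "card heavy = 2 ^ t - 1" "w = 2 ^ (l - 1)"
    "n = 2 ^ (l - 1) - 2 ^ (l - t - 1)" "2 * n = 2 ^ l - 2 ^ (l - t)"
    "card {c \<in> C. lee_wt c = n} = 2 ^ l - 2 ^ t"
    using assms(2) unfolding l_def by (rule weight_distribution)
  have "card (Gray ` C) = 2 ^ l"
    using card_of_type[OF assms(2)] by (simp add: card_Gray_image l_def)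
  moreover have "{ham_wt y | y. y \<in> Gray ` C \<and> y \<noteq> replicate (2 * n) 0} =
      {2 ^ (l - 1) - 2 ^ (l - t - 1), 2 ^ (l - 1)}"
    using Gray_weights lee_weights_eq t(4,5) by simp
  moreover have "card {y \<in> Gray ` C. ham_wt y = 2 ^ (l - 1) - 2 ^ (l - t - 1)} = 2 ^ l - 2 ^ t"
    unfolding t(5)[symmetric] using card_Gray_weight t(7) by simp
  moreover have "card {y \<in> Gray ` C. ham_wt y = 2 ^ (l - 1)} = 2 ^ t - 1"
    unfolding t(4)[symmetric] using card_Gray_weight t(3) by (simp add: heavy_def)
  ultimately show ?thesis
    unfolding l_def[symmetric] using t(1,2,6) length_code by auto
qed

end
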